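(* $G$ contains an edge $uv$ such that $u \notin Z$ and $v \notin Z$.
   Context: $(G,k,t,T_1,T_2)$ is an instance of the Cheap Coloring Extension problem ($G$ bipartite, $T_1,T_2$ disjoint vertex sets with $|T_1|+|T_2|\le t$). A set $X\subseteq V(G)$ is well-connected if for all $X_1,X_2\subseteq X$ with $|X_1|=|X_2|\le |X|/2$ there are $|X_1|$ vertex-disjoint paths in $G$ with one endpoint in $X_1$ and the other in $X_2$; $Y$ is a well-connected set in $G$ of size at least $2(4k^2)\, t\, 4^{4k^2}+2$. Let $G^*$ be obtained from $G$ by adding a new vertex $y^*$ adjacent to all vertices of $Y$. For vertices $x,y$, a set $X$ is $(x,y)$-important if $x\in X$, $y\notin X$, $G^*[X]$ is connected, and there is no $X'\supset X$ with $y\notin X'$, $G^*[X']$ connected and $d_{G^*}(X')\le d_{G^*}(X)$, where $d_{G^*}(X)$ is the number of edges of $G^*$ with exactly one endpoint in $X$. $Z$ is the union of all $(x,y^* )$-important sets $X$ in $G^*$ with $d_{G^*}(X)\le 4k^2$, over all $x\in T_1\cup T_2$. *)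

theory Defs
  imports Main
begin

definition simple_graph :: "'a set \<Rightarrow> 'a set set \<Rightarrow> bool" where
  "simple_graph V E \<longleftrightarrow> finite V \<and> (\<forall>e\<in>E. e \<subseteq> V \<and> card e = 2)"

definition bipartite :: "'a set \<Rightarrow> 'a set set \<Rightarrow> bool" where
  "bipartite V E \<longleftrightarrow> (\<exists>A B. A \<union> B = V \<and> A \<inter> B = {} \<and>
      (\<forall>e\<in>E. card (e \<inter> A) = 1 \<and> card (e \<inter> B) = 1))"

definition is_path :: "'a set \<Rightarrow> 'a set set \<Rightarrow> 'a list \<Rightarrow> bool" where
  "is_path V E p \<longleftrightarrow> p \<noteq> [] \<and> distinct p \<and> set p \<subseteq> V \<and>
      (\<forall>i. Suc i < length p \<longrightarrow> {p ! i, p ! Suc i} \<in> E)"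

definition well_connected :: "'a set \<Rightarrow> 'a set set \<Rightarrow> 'a set \<Rightarrow> bool" where
  "well_connected V E X \<longleftrightarrow>
     (\<forall>X1 X2. X1 \<subseteq> X \<and> X2 \<subseteq> X \<and> card X1 = card X2 \<and> 2 * card X1 \<le> card X \<longrightarrow>
        (\<exists>P. finite P \<and> card P = card X1 \<and>
             (\<forall>p\<in>P. is_path V E p \<and> hd p \<in> X1 \<and> last p \<in> X2) \<and>
             (\<forall>p\<in>P. \<forall>q\<in>P. p \<noteq> q \<longrightarrow> set p \<inter> set q = {})))"

definition induced_connected :: "'a set \<Rightarrow> 'a set set \<Rightarrow> 'a set \<Rightarrow> bool" where
  "induced_connected V E X \<longleftrightarrow> X \<noteq> {} \<and> X \<subseteq> V \<and>
     (\<forall>u\<in>X. \<forall>v\<in>X. \<exists>p. is_path X {e\<in>E. e \<subseteq> X} p \<and> hd p = u \<and> last p = v)"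

definition boundary_deg :: "'a set set \<Rightarrow> 'a set \<Rightarrow> nat" where
  "boundary_deg E X = card {e\<in>E. card (e \<inter> X) = 1}"

definition important :: "'a set \<Rightarrow> 'a set set \<Rightarrow> 'a \<Rightarrow> 'a \<Rightarrow> 'a set \<Rightarrow> bool" where
  "important V E x y X \<longleftrightarrow> x \<in> X \<and> y \<notin> X \<and> induced_connected V E X \<and>
     \<not> (\<exists>X'. X \<subset> X' \<and> y \<notin> X' \<and> induced_connected V E X' \<and>
              boundary_deg E X' \<le> boundary_deg E X)"

definition star_V :: "'a set \<Rightarrow> 'a \<Rightarrow> 'a set" where
  "star_V V ys = insert ys V"

definition star_E :: "'a set set \<Rightarrow> 'a set \<Rightarrow> 'a \<Rightarrow> 'a set set" where
  "star_E E Y ys = E \<union> {{ys, y} | y. y \<in> Y}"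

definition Zset :: "'a set \<Rightarrow> 'a set set \<Rightarrow> 'a set \<Rightarrow> 'a \<Rightarrow> 'a set \<Rightarrow> 'a set \<Rightarrow> nat \<Rightarrow> 'a set" where
  "Zset V E Y ys T1 T2 k = \<Union>{X. \<exists>x\<in>T1 \<union> T2.
       important (star_V V ys) (star_E E Y ys) x ys X \<and>
       boundary_deg (star_E E Y ys) X \<le> 4 * k^2}"

end

theory Submission
  imports Defs
begin

text \<open>Suppose every edge of \<open>G\<close> has an endpoint in \<open>Z\<close>, and let \<open>p = 4k\<^sup>2\<close>.
  For a fixed \<open>x\<close> there are at most \<open>4\<^sup>p\<close> important \<open>(x, y\<^sup>*)\<close>-sets of boundary
  degree at most \<open>p\<close>, so the set \<open>F\<close> of edges of \<open>G\<^sup>*\<close> leaving one of the important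
  sets forming \<open>Z\<close> has at most \<open>t \<cdot> 4\<^sup>p \<cdot> p\<close> elements. On the other hand, splitting
  \<open>Y - Z\<close> into two halves, well-connectedness yields \<open>\<lfloor>|Y - Z|/2\<rfloor>\<close> disjoint paths
  between them. Each path starts outside \<open>Z\<close>, so its first edge enters an important set
  and lies in \<open>F\<close>; these edges are distinct and different from the edges \<open>y\<^sup>*y\<close>,
  \<open>y \<in> Y \<inter> Z\<close>, which lie in \<open>F\<close> as well. Hence \<open>|Y| \<le> 2|F| + 1\<close>, contradicting the
  size of \<open>Y\<close>.\<close>

section \<open>Connectivity of induced subgraphs\<close>

definition induced_adj :: "'a set set \<Rightarrow> 'a set \<Rightarrow> ('a \<times> 'a) set" where
  "induced_adj E X = {(a, b). {a, b} \<in> E \<and> a \<in> X \<and> b \<in> X}"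

lemma induced_adj_sym: "(a, b) \<in> induced_adj E X \<Longrightarrow> (b, a) \<in> induced_adj E X"
  by (auto simp: induced_adj_def insert_commute)

lemma induced_adj_rtrancl_sym:
  "(a, b) \<in> (induced_adj E X)\<^sup>* \<Longrightarrow> (b, a) \<in> (induced_adj E X)\<^sup>*"
  by (induction rule: rtrancl_induct)
    (auto intro: converse_rtrancl_into_rtrancl induced_adj_sym)

lemma induced_adj_rtrancl_closed:
  "(a, b) \<in> (induced_adj E X)\<^sup>* \<Longrightarrow> a \<in> X \<Longrightarrow> b \<in> X"
  by (induction rule: rtrancl_induct) (auto simp: induced_adj_def)

lemma induced_adj_rtrancl_mono:
  "X \<subseteq> X' \<Longrightarrow> E \<subseteq> E' \<Longrightarrow> (a, b) \<in> (induced_adj E X)\<^sup>* \<Longrightarrow> (a, b) \<in> (induced_adj E' X')\<^sup>*"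
  by (erule rtrancl_mono[THEN subsetD, rotated]) (auto simp: induced_adj_def)

lemma is_path_nth_rtrancl:
  assumes "is_path X {e\<in>E. e \<subseteq> X} p" "j < length p"
  shows "(hd p, p ! j) \<in> (induced_adj E X)\<^sup>*"
  using assms(2)
proof (induction j)
  case 0
  then show ?case using assms(1) by (simp add: is_path_def hd_conv_nth)
next
  case (Suc j)
  have "{p ! j, p ! Suc j} \<in> E" "{p ! j, p ! Suc j} \<subseteq> X"
    using assms(1) Suc.prems unfolding is_path_def by blast+
  then have "(p ! j, p ! Suc j) \<in> induced_adj E X" by (simp add: induced_adj_def)
  with Suc show ?case by (meson Suc_lessD rtrancl_into_rtrancl)
qed

lemma is_path_take:
  assumes "is_path V E p" "0 < n"
  shows "is_path V E (take n p)"
  using assms set_take_subset[of n p] unfolding is_path_def by (auto simp: not_less)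

lemma is_path_snoc:
  assumes "is_path V E p" "{last p, b} \<in> E" "b \<in> V" "b \<notin> set p"
  shows "is_path V E (p @ [b])"
  unfolding is_path_def
proof (intro conjI allI impI)
  show "distinct (p @ [b])" "set (p @ [b]) \<subseteq> V" using assms by (auto simp: is_path_def)
  fix i assume i: "Suc i < length (p @ [b])"
  show "{(p @ [b]) ! i, (p @ [b]) ! Suc i} \<in> E"
  proof (cases "Suc i < length p")
    case True
    then show ?thesis using assms(1) by (simp add: is_path_def nth_append)
  next
    case False
    with i have "i = length p - 1" "p \<noteq> []" by auto
    then show ?thesis using assms(2) by (simp add: nth_append last_conv_nth)
  qed
qed simp

lemma rtrancl_is_path:
  assumes "(u, v) \<in> (induced_adj E X)\<^sup>*" "u \<in> X"
  shows "\<exists>p. is_path X {e\<in>E. e \<subseteq> X} p \<and> hd p = u \<and> last p = v"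
  using assms
proof (induction rule: rtrancl_induct)
  case base
  show ?case by (rule exI[of _ "[u]"]) (simp add: is_path_def base)
next
  case (step a b)
  then obtain p where p: "is_path X {e\<in>E. e \<subseteq> X} p" "hd p = u" "last p = a" by blast
  have "p \<noteq> []" using p(1) by (simp add: is_path_def)
  show ?case
  proof (cases "b \<in> set p")
    case True
    then obtain i where i: "i < length p" "p ! i = b" by (auto simp: in_set_conv_nth)
    then have "hd (take (Suc i) p) = u" "last (take (Suc i) p) = b"
      using p(2) \<open>p \<noteq> []\<close> by (auto simp: hd_conv_nth last_conv_nth)
    with is_path_take[OF p(1)] show ?thesis by blast
  next
    case False
    have "{last p, b} \<in> {e\<in>E. e \<subseteq> X}" "b \<in> X"
      using step(2) p(3) by (auto simp: induced_adj_def)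
    with is_path_snoc[OF p(1) _ _ False] p(2) \<open>p \<noteq> []\<close> show ?thesis
      by (intro exI[of _ "p @ [b]"]) auto
  qed
qed

lemma induced_connected_iff:
  "induced_connected V E X \<longleftrightarrow>
     X \<noteq> {} \<and> X \<subseteq> V \<and> (\<forall>u\<in>X. \<forall>v\<in>X. (u, v) \<in> (induced_adj E X)\<^sup>*)"
proof -
  have "(u, v) \<in> (induced_adj E X)\<^sup>* \<longleftrightarrow> (\<exists>p. is_path X {e\<in>E. e \<subseteq> X} p \<and> hd p = u \<and> last p = v)"
    if "u \<in> X" for u v
  proof
    assume "\<exists>p. is_path X {e\<in>E. e \<subseteq> X} p \<and> hd p = u \<and> last p = v"
    then obtain p where p: "is_path X {e\<in>E. e \<subseteq> X} p" "hd p = u" "last p = v" by blast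
    then have "p \<noteq> []" by (simp add: is_path_def)
    with is_path_nth_rtrancl[OF p(1), of "length p - 1"] p(2,3)
    show "(u, v) \<in> (induced_adj E X)\<^sup>*" by (simp add: last_conv_nth)
  qed (rule rtrancl_is_path[OF _ that])
  then show ?thesis unfolding induced_connected_def by blast
qed

section \<open>Boundary degree\<close>

lemma simple_graph_edgeE:
  assumes "simple_graph V E" "e \<in> E"
  obtains a b where "a \<noteq> b" "e = {a, b}" "a \<in> V" "b \<in> V"
  using assms unfolding simple_graph_def by (metis card_2_iff insert_subset)

lemma simple_graph_finite_edges: "simple_graph V E \<Longrightarrow> finite E"
  unfolding simple_graph_def by (meson Pow_iff finite_Pow_iff finite_subset subsetI)

lemma simple_graph_Diff: "simple_graph V E \<Longrightarrow> simple_graph V (E - F)"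
  by (simp add: simple_graph_def)

definition boundary_edges :: "'a set set \<Rightarrow> 'a set \<Rightarrow> 'a set set" where
  "boundary_edges E X = {e\<in>E. card (e \<inter> X) = 1}"

lemma boundary_deg_eq_card: "boundary_deg E X = card (boundary_edges E X)"
  by (simp add: boundary_deg_def boundary_edges_def)

lemma card_doubleton_Int_eq_Suc_0:
  "a \<noteq> b \<Longrightarrow> card ({a, b} \<inter> S) = Suc 0 \<longleftrightarrow> (a \<in> S \<longleftrightarrow> b \<notin> S)"
  by (cases "a \<in> S"; cases "b \<in> S") auto

lemma boundary_edgeE:
  assumes "simple_graph V E" "e \<in> boundary_edges E X"
  obtains u v where "e = {u, v}" "u \<in> X" "v \<notin> X"
proof -
  have e: "e \<in> E" "card (e \<inter> X) = 1" using assms(2) by (auto simp: boundary_edges_def)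
  then obtain a b where ab: "a \<noteq> b" "e = {a, b}" using simple_graph_edgeE[OF assms(1)] by blast
  then have "a \<in> X \<longleftrightarrow> b \<notin> X" using e(2) by (simp add: card_doubleton_Int_eq_Suc_0)
  then show ?thesis using that ab(2) by (metis insert_commute)
qed

lemma boundary_deg_pos:
  assumes "simple_graph V E" "boundary_edges E X \<noteq> {}"
  shows "0 < boundary_deg E X"
proof -
  have "finite (boundary_edges E X)"
    using simple_graph_finite_edges[OF assms(1)] by (simp add: boundary_edges_def)
  with assms(2) show ?thesis by (simp add: boundary_deg_eq_card card_gt_0_iff)
qed

lemma boundary_deg_submodular:
  assumes "simple_graph V E"
  shows "boundary_deg E (X \<union> Y) + boundary_deg E (X \<inter> Y) \<le> boundary_deg E X + boundary_deg E Y"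
proof -
  let ?B = "boundary_edges E"
  have "e \<in> ?B X \<union> ?B Y" if e: "e \<in> ?B (X \<union> Y) \<union> ?B (X \<inter> Y)" for e
  proof -
    obtain a b where "a \<noteq> b" "e = {a, b}"
      using e by (auto simp: boundary_edges_def elim: simple_graph_edgeE[OF assms])
    then show ?thesis using e by (auto simp: boundary_edges_def card_doubleton_Int_eq_Suc_0)
  qed
  moreover have "e \<in> ?B X \<inter> ?B Y" if e: "e \<in> ?B (X \<union> Y) \<inter> ?B (X \<inter> Y)" for e
  proof -
    obtain a b where "a \<noteq> b" "e = {a, b}"
      using e by (auto simp: boundary_edges_def elim: simple_graph_edgeE[OF assms])
    then show ?thesis using e by (auto simp: boundary_edges_def card_doubleton_Int_eq_Suc_0)
  qed
  ultimately have un: "?B (X \<union> Y) \<union> ?B (X \<inter> Y) \<subseteq> ?B X \<union> ?B Y"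
    and int: "?B (X \<union> Y) \<inter> ?B (X \<inter> Y) \<subseteq> ?B X \<inter> ?B Y" by blast+
  have fin: "finite (?B S)" for S
    using simple_graph_finite_edges[OF assms] by (simp add: boundary_edges_def)
  have "card (?B (X \<union> Y)) + card (?B (X \<inter> Y))
      = card (?B (X \<union> Y) \<union> ?B (X \<inter> Y)) + card (?B (X \<union> Y) \<inter> ?B (X \<inter> Y))"
    by (rule card_Un_Int[OF fin fin])
  also have "\<dots> \<le> card (?B X \<union> ?B Y) + card (?B X \<inter> ?B Y)"
    using un int fin by (intro add_mono card_mono) auto
  also have "\<dots> = card (?B X) + card (?B Y)"
    by (rule card_Un_Int[OF fin fin, symmetric])
  finally show ?thesis unfolding boundary_deg_eq_card .
qed

lemma boundary_edges_Diff_edge: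
  "boundary_edges E X \<subseteq> insert e (boundary_edges (E - {e}) X)"
  "e \<in> E \<Longrightarrow> card (e \<inter> X) = 1 \<Longrightarrow> boundary_edges E X = insert e (boundary_edges (E - {e}) X)"
  by (auto simp: boundary_edges_def)

lemma boundary_deg_Diff_edge_le:
  assumes "finite E"
  shows "boundary_deg E X \<le> boundary_deg (E - {e}) X + 1"
proof -
  have fin: "finite (boundary_edges (E - {e}) X)" using assms by (simp add: boundary_edges_def)
  then have "card (boundary_edges E X) \<le> card (insert e (boundary_edges (E - {e}) X))"
    by (intro card_mono boundary_edges_Diff_edge(1)) simp
  also have "\<dots> \<le> card (boundary_edges (E - {e}) X) + 1"
    using fin by (simp add: card_insert_if)
  finally show ?thesis unfolding boundary_deg_eq_card .
qed

lemma boundary_deg_Diff_boundary_edge: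
  assumes "finite E" "e \<in> E" "card (e \<inter> X) = 1"
  shows "boundary_deg E X = boundary_deg (E - {e}) X + 1"
  using assms unfolding boundary_deg_eq_card boundary_edges_Diff_edge(2)[OF assms(2,3)]
  by (simp add: boundary_edges_def)

lemma induced_connected_rtrancl:
  "induced_connected V E X \<Longrightarrow> u \<in> X \<Longrightarrow> v \<in> X \<Longrightarrow> (u, v) \<in> (induced_adj E X)\<^sup>*"
  by (simp add: induced_connected_iff)

lemma induced_connected_subset: "induced_connected V E X \<Longrightarrow> X \<subseteq> V"
  by (simp add: induced_connected_iff)

lemma induced_connected_singleton: "x \<in> V \<Longrightarrow> induced_connected V E {x}"
  by (simp add: induced_connected_iff)

lemma induced_connected_Un:
  assumes "induced_connected V E C" "induced_connected V E D" "C \<inter> D \<noteq> {}"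
  shows "induced_connected V E (C \<union> D)"
proof -
  obtain w where w: "w \<in> C" "w \<in> D" using assms(3) by blast
  have to_w: "(a, w) \<in> (induced_adj E (C \<union> D))\<^sup>*" if "a \<in> C \<union> D" for a
  proof (cases "a \<in> C")
    case True
    with assms(1) w(1) show ?thesis
      by (blast intro: induced_adj_rtrancl_mono[OF Un_upper1 order_refl] induced_connected_rtrancl)
  next
    case False
    with that assms(2) w(2) show ?thesis
      by (blast intro: induced_adj_rtrancl_mono[OF Un_upper2 order_refl] induced_connected_rtrancl)
  qed
  show ?thesis unfolding induced_connected_iff
  proof (intro conjI ballI)
    show "C \<union> D \<noteq> {}" "C \<union> D \<subseteq> V" using assms(1,2) by (auto simp: induced_connected_iff)
    fix u v assume "u \<in> C \<union> D" "v \<in> C \<union> D"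
    then show "(u, v) \<in> (induced_adj E (C \<union> D))\<^sup>*"
      by (blast intro: rtrancl_trans[OF to_w induced_adj_rtrancl_sym[OF to_w]])
  qed
qed

lemma induced_connected_insert:
  assumes "induced_connected V E D" "u \<in> D" "{u, v} \<in> E" "v \<in> V"
  shows "induced_connected V E (insert v D)"
proof -
  have "(u, v) \<in> induced_adj E {u, v}" using assms(3) by (simp add: induced_adj_def)
  then have "induced_connected V E {u, v}"
    using assms induced_connected_subset[OF assms(1)] unfolding induced_connected_iff
    by (blast dest: induced_adj_sym)
  then have "induced_connected V E ({u, v} \<union> D)"
    using induced_connected_Un assms(1,2) by blast
  moreover have "{u, v} \<union> D = insert v D" using assms(2) by auto
  ultimately show ?thesis by simp
qed

lemma induced_connected_leaves_set:
  assumes "induced_connected V E X" "a \<in> X \<inter> D" "b \<in> X - D"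
  shows "boundary_edges E D \<noteq> {}"
proof -
  have "(a, b) \<in> (induced_adj E X)\<^sup>*"
    using assms by (intro induced_connected_rtrancl[OF assms(1)]) auto
  moreover have "b \<notin> D" using assms(3) by blast
  ultimately show ?thesis
  proof (induction rule: rtrancl_induct)
    case base
    then show ?case using assms(2) by blast
  next
    case (step w z)
    show ?case
    proof (cases "w \<in> D")
      case True
      with step have "{w, z} \<in> E" "w \<noteq> z" "z \<notin> D" by (auto simp: induced_adj_def)
      with True show ?thesis by (auto simp: boundary_edges_def card_doubleton_Int_eq_Suc_0)
    next
      case False
      then show ?thesis by (rule step.IH)
    qed
  qed
qed

lemma induced_connected_mono_edges:
  assumes "induced_connected V E' X" "E' \<subseteq> E"
  shows "induced_connected V E X"
  using assms(1) induced_adj_rtrancl_mono[OF order_refl assms(2)]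
  unfolding induced_connected_iff by blast

lemma induced_connected_Diff_edge_iff:
  assumes "\<not> e \<subseteq> X"
  shows "induced_connected V (E - {e}) X \<longleftrightarrow> induced_connected V E X"
proof -
  have "{a, b} \<noteq> e" if "a \<in> X" "b \<in> X" for a b using assms that by blast
  then have "induced_adj (E - {e}) X = induced_adj E X" unfolding induced_adj_def by auto
  then show ?thesis by (simp add: induced_connected_iff)
qed

definition reachable_in :: "'a set set \<Rightarrow> 'a set \<Rightarrow> 'a set \<Rightarrow> 'a set" where
  "reachable_in E X A = {v. \<exists>a\<in>A. (a, v) \<in> (induced_adj E X)\<^sup>*}"

lemma reachable_in_superset: "A \<subseteq> reachable_in E X A"
  unfolding reachable_in_def by blast

lemma reachable_in_subset: "A \<subseteq> X \<Longrightarrow> reachable_in E X A \<subseteq> X"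
  unfolding reachable_in_def by (blast dest: induced_adj_rtrancl_closed)

lemma reachable_in_step:
  "a \<in> reachable_in E X A \<Longrightarrow> (a, b) \<in> induced_adj E X \<Longrightarrow> b \<in> reachable_in E X A"
  unfolding reachable_in_def by (blast intro: rtrancl_into_rtrancl)

lemma induced_connected_reachable_in:
  assumes "induced_connected V E A" "A \<subseteq> X" "X \<subseteq> V"
  shows "induced_connected V E (reachable_in E X A)"
proof -
  let ?R = "reachable_in E X A"
  have within: "(a, v) \<in> (induced_adj E ?R)\<^sup>*" if "a \<in> A" "(a, v) \<in> (induced_adj E X)\<^sup>*" for a v
    using that(2)
  proof (induction rule: rtrancl_induct)
    case (step w z)
    have "w \<in> ?R" using that(1) step(1) unfolding reachable_in_def by blast
    then have "(w, z) \<in> induced_adj E ?R"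
      using step(2) reachable_in_step[of w] by (auto simp: induced_adj_def)
    with step(3) show ?case by (rule rtrancl_into_rtrancl)
  qed simp
  have "(u, v) \<in> (induced_adj E ?R)\<^sup>*" if u: "u \<in> ?R" and v: "v \<in> ?R" for u v
  proof -
    obtain a b where a: "a \<in> A" "(a, u) \<in> (induced_adj E X)\<^sup>*"
      and b: "b \<in> A" "(b, v) \<in> (induced_adj E X)\<^sup>*"
      using u v unfolding reachable_in_def by blast
    note within[OF a] within[OF b]
    moreover have "(a, b) \<in> (induced_adj E ?R)\<^sup>*"
      by (rule induced_adj_rtrancl_mono[OF reachable_in_superset order_refl])
        (rule induced_connected_rtrancl[OF assms(1) a(1) b(1)])
    ultimately show ?thesis by (meson induced_adj_rtrancl_sym rtrancl_trans)
  qed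
  moreover have "?R \<noteq> {}" "?R \<subseteq> V"
    using assms reachable_in_superset[of A E X] reachable_in_subset[of A X E]
    by (auto simp: induced_connected_iff)
  ultimately show ?thesis unfolding induced_connected_iff by blast
qed

lemma boundary_edges_reachable_in:
  assumes "simple_graph V E" "A \<subseteq> X"
  shows "boundary_edges E (reachable_in E X A) \<subseteq> boundary_edges E X"
proof
  let ?R = "reachable_in E X A"
  fix e assume e: "e \<in> boundary_edges E ?R"
  then obtain u v where uv: "e = {u, v}" "u \<in> ?R" "v \<notin> ?R" by (rule boundary_edgeE[OF assms(1)])
  have "e \<in> E" using e by (simp add: boundary_edges_def)
  have "u \<in> X" using uv(2) reachable_in_subset[OF assms(2)] by blast
  moreover have "v \<notin> X"
  proof
    assume "v \<in> X"
    with \<open>u \<in> X\<close> \<open>e \<in> E\<close> uv(1) have "(u, v) \<in> induced_adj E X" by (simp add: induced_adj_def)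
    with uv(2,3) show False by (metis reachable_in_step)
  qed
  moreover have "u \<noteq> v" using uv(2,3) by blast
  ultimately show "e \<in> boundary_edges E X"
    using \<open>e \<in> E\<close> uv(1) by (simp add: boundary_edges_def card_doubleton_Int_eq_Suc_0)
qed

section \<open>Minimum cuts\<close>

definition min_cut :: "'a set \<Rightarrow> 'a set set \<Rightarrow> 'a \<Rightarrow> 'a set \<Rightarrow> nat" where
  "min_cut V E y A = Min (boundary_deg E ` {X. A \<subseteq> X \<and> X \<subseteq> V \<and> y \<notin> X})"

lemma finite_cuts: "finite V \<Longrightarrow> finite {X. A \<subseteq> X \<and> X \<subseteq> V \<and> y \<notin> X}"
  by (rule finite_subset[of _ "Pow V"]) auto

lemma min_cut_le:
  assumes "finite V" "A \<subseteq> X" "X \<subseteq> V" "y \<notin> X"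
  shows "min_cut V E y A \<le> boundary_deg E X"
  unfolding min_cut_def using assms finite_cuts[OF assms(1)] by (intro Min_le) auto

lemma min_cut_attained:
  assumes "finite V" "A \<subseteq> V" "y \<notin> A"
  obtains X where "A \<subseteq> X" "X \<subseteq> V" "y \<notin> X" "boundary_deg E X = min_cut V E y A"
proof -
  have "min_cut V E y A \<in> boundary_deg E ` {X. A \<subseteq> X \<and> X \<subseteq> V \<and> y \<notin> X}"
    unfolding min_cut_def using assms finite_cuts[OF assms(1)] by (intro Min_in) auto
  then obtain X where "A \<subseteq> X" "X \<subseteq> V" "y \<notin> X" "min_cut V E y A = boundary_deg E X"
    by blast
  then show ?thesis by (intro that) simp_all
qed

lemma min_cut_mono:
  assumes "finite V" "A \<subseteq> A'" "A' \<subseteq> V" "y \<notin> A'"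
  shows "min_cut V E y A \<le> min_cut V E y A'"
proof -
  obtain X where "A' \<subseteq> X" "X \<subseteq> V" "y \<notin> X" "boundary_deg E X = min_cut V E y A'"
    using min_cut_attained[OF assms(1,3,4)] .
  with assms show ?thesis using min_cut_le[of V A X y E] by auto
qed

lemma min_cut_Diff_edge:
  assumes "simple_graph V E" "A \<subseteq> V" "y \<notin> A"
  shows "min_cut V E y A \<le> min_cut V (E - {e}) y A + 1"
proof -
  have "finite V" using assms(1) by (simp add: simple_graph_def)
  obtain X where X: "A \<subseteq> X" "X \<subseteq> V" "y \<notin> X" "boundary_deg (E - {e}) X = min_cut V (E - {e}) y A"
    using min_cut_attained[OF \<open>finite V\<close> assms(2,3)] .
  have "min_cut V E y A \<le> boundary_deg E X" using min_cut_le[OF \<open>finite V\<close> X(1-3)] .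
  also have "\<dots> \<le> boundary_deg (E - {e}) X + 1"
    using boundary_deg_Diff_edge_le[OF simple_graph_finite_edges[OF assms(1)]] .
  finally show ?thesis using X(4) by simp
qed

definition connected_min_cut :: "'a set \<Rightarrow> 'a set set \<Rightarrow> 'a \<Rightarrow> 'a set \<Rightarrow> 'a set \<Rightarrow> bool" where
  "connected_min_cut V E y A C \<longleftrightarrow>
     A \<subseteq> C \<and> y \<notin> C \<and> induced_connected V E C \<and> boundary_deg E C = min_cut V E y A"

lemma connected_min_cut_exists:
  assumes "simple_graph V E" "induced_connected V E A" "y \<notin> A"
  obtains C where "connected_min_cut V E y A C"
proof -
  have fin: "finite V" using assms(1) by (simp add: simple_graph_def)
  have AV: "A \<subseteq> V" using induced_connected_subset[OF assms(2)] .
  obtain X where X: "A \<subseteq> X" "X \<subseteq> V" "y \<notin> X" "boundary_deg E X = min_cut V E y A"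
    using min_cut_attained[OF fin AV assms(3)] .
  let ?C = "reachable_in E X A"
  have C: "A \<subseteq> ?C" "?C \<subseteq> X" using reachable_in_superset reachable_in_subset[OF X(1)] .
  have "boundary_deg E ?C \<le> boundary_deg E X"
    unfolding boundary_deg_eq_card using simple_graph_finite_edges[OF assms(1)]
    by (intro card_mono boundary_edges_reachable_in[OF assms(1) X(1)]) (simp add: boundary_edges_def)
  moreover have "min_cut V E y A \<le> boundary_deg E ?C"
    using min_cut_le[OF fin C(1)] C(2) X(2,3) by blast
  ultimately have "connected_min_cut V E y A ?C"
    unfolding connected_min_cut_def
    using C X induced_connected_reachable_in[OF assms(2) X(1,2)] by auto
  then show ?thesis by (rule that)
qed

lemma connected_min_cut_Un:
  assumes "simple_graph V E" "A \<noteq> {}"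
    and "connected_min_cut V E y A C" "connected_min_cut V E y A D"
  shows "connected_min_cut V E y A (C \<union> D)"
proof -
  have fin: "finite V" using assms(1) by (simp add: simple_graph_def)
  have C: "A \<subseteq> C" "C \<subseteq> V" "y \<notin> C" "induced_connected V E C" "boundary_deg E C = min_cut V E y A"
    using assms(3) induced_connected_subset unfolding connected_min_cut_def by blast+
  have D: "A \<subseteq> D" "D \<subseteq> V" "y \<notin> D" "induced_connected V E D" "boundary_deg E D = min_cut V E y A"
    using assms(4) induced_connected_subset unfolding connected_min_cut_def by blast+
  have "min_cut V E y A \<le> boundary_deg E (C \<inter> D)" "min_cut V E y A \<le> boundary_deg E (C \<union> D)"
    using C D by (auto intro!: min_cut_le[OF fin])
  with boundary_deg_submodular[OF assms(1), of C D] C(5) D(5)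
  have "boundary_deg E (C \<union> D) = min_cut V E y A" by linarith
  moreover have "induced_connected V E (C \<union> D)"
    using induced_connected_Un[OF C(4) D(4)] C(1) D(1) assms(2) by blast
  ultimately show ?thesis using C D unfolding connected_min_cut_def by blast
qed

text \<open>By submodularity, a largest connected minimum cut contains all the others.\<close>
lemma furthest_connected_min_cut:
  assumes "simple_graph V E" "induced_connected V E A" "y \<notin> A"
  obtains R where "connected_min_cut V E y A R"
    "\<And>C. connected_min_cut V E y A C \<Longrightarrow> C \<subseteq> R"
proof -
  have fin: "finite V" using assms(1) by (simp add: simple_graph_def)
  let ?M = "{C. connected_min_cut V E y A C}"
  have "?M \<noteq> {}" using connected_min_cut_exists[OF assms] by blast
  have "card C < Suc (card V)" if "C \<in> ?M" for C
    using that fin card_mono[of V C]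
    by (auto simp: connected_min_cut_def dest: induced_connected_subset)
  with \<open>?M \<noteq> {}\<close> obtain R where R: "R \<in> ?M" "\<And>C. C \<in> ?M \<Longrightarrow> card C \<le> card R"
    using ex_has_greatest_nat[of "\<lambda>C. C \<in> ?M" _ card "Suc (card V)"] by blast
  have "C \<subseteq> R" if "C \<in> ?M" for C
  proof -
    have "C \<union> R \<in> ?M"
      using connected_min_cut_Un[OF assms(1) _ _] that R(1) assms(2)
      by (auto simp: induced_connected_iff)
    then have "card (C \<union> R) \<le> card R" by (rule R(2))
    moreover have "finite (C \<union> R)"
      using \<open>C \<union> R \<in> ?M\<close> fin finite_subset
      by (auto simp: connected_min_cut_def dest: induced_connected_subset)
    ultimately show ?thesis by (metis Un_upper2 card_seteq sup.absorb_iff2 sup_commute)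
  qed
  with R(1) show ?thesis using that by blast
qed

section \<open>Counting important sets\<close>

lemma importantD:
  assumes "important V E x y X"
  shows "x \<in> X" "y \<notin> X" "induced_connected V E X"
  using assms unfolding important_def by blast+

lemma important_boundary_deg_less:
  assumes "important V E x y X" "X \<subset> X'" "y \<notin> X'" "induced_connected V E X'"
  shows "boundary_deg E X < boundary_deg E X'"
  using assms unfolding important_def by (meson not_le)

lemma important_Diff_boundary_edge:
  assumes "simple_graph V E" "important V E x y X" "e \<in> E" "card (e \<inter> X) = 1"
  shows "important V (E - {e}) x y X"
proof -
  have fin: "finite E" using simple_graph_finite_edges[OF assms(1)] .
  obtain a b where "a \<noteq> b" "e = {a, b}" using simple_graph_edgeE[OF assms(1,3)] by blast
  then have not_sub: "\<not> e \<subseteq> X" using assms(4) by (simp add: card_doubleton_Int_eq_Suc_0)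
  have conn: "induced_connected V (E - {e}) X"
    unfolding induced_connected_Diff_edge_iff[OF not_sub] by (rule importantD(3)[OF assms(2)])
  have nle: "\<not> boundary_deg (E - {e}) X' \<le> boundary_deg (E - {e}) X"
    if "X \<subset> X'" "y \<notin> X'" "induced_connected V (E - {e}) X'" for X'
  proof -
    have "boundary_deg E X < boundary_deg E X'"
      by (rule important_boundary_deg_less[OF assms(2) that(1,2)])
        (rule induced_connected_mono_edges[OF that(3) Diff_subset])
    then show ?thesis
      using boundary_deg_Diff_boundary_edge[OF fin assms(3,4)] boundary_deg_Diff_edge_le[OF fin, of X' e]
      by linarith
  qed
  show ?thesis
    unfolding important_def using importantD(1,2)[OF assms(2)] conn nle by blast
qed

definition important_sets :: "'a set \<Rightarrow> 'a set set \<Rightarrow> 'a \<Rightarrow> 'a \<Rightarrow> 'a set \<Rightarrow> nat \<Rightarrow> 'a set set" where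
  "important_sets V E x y A p = {X. A \<subseteq> X \<and> important V E x y X \<and> boundary_deg E X \<le> p}"

lemma finite_important_sets: "finite V \<Longrightarrow> finite (important_sets V E x y A p)"
  by (rule finite_subset[of _ "Pow V"])
    (auto simp: important_sets_def dest: importantD(3) induced_connected_subset)

lemma important_sets_min_cut_le:
  assumes "finite V" "X \<in> important_sets V E x y A p"
  shows "min_cut V E y A \<le> boundary_deg E X"
  using assms(2) importantD[of V E x y X] induced_connected_subset[of V E X]
  by (intro min_cut_le[OF assms(1)]) (auto simp: important_sets_def)

lemma important_sets_empty:
  assumes "finite V" "p < min_cut V E y A"
  shows "important_sets V E x y A p = {}"
proof (rule equals0I)
  fix X assume X: "X \<in> important_sets V E x y A p"
  then have "boundary_deg E X \<le> p" by (simp add: important_sets_def)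
  with important_sets_min_cut_le[OF assms(1) X] assms(2) show False by linarith
qed

lemma connected_min_cut_subset_important:
  assumes "simple_graph V E" "A \<noteq> {}" "connected_min_cut V E y A R"
    and "X \<in> important_sets V E x y A p"
  shows "R \<subseteq> X"
proof (rule ccontr)
  assume "\<not> R \<subseteq> X"
  have fin: "finite V" using assms(1) by (simp add: simple_graph_def)
  have R: "A \<subseteq> R" "y \<notin> R" "induced_connected V E R" "boundary_deg E R = min_cut V E y A"
    using assms(3) unfolding connected_min_cut_def by blast+
  have X: "A \<subseteq> X" "important V E x y X" using assms(4) by (auto simp: important_sets_def)
  note iX = importantD[OF X(2)]
  have "min_cut V E y A \<le> boundary_deg E (X \<inter> R)"
    using R X iX induced_connected_subset by (intro min_cut_le[OF fin]) blast+
  with boundary_deg_submodular[OF assms(1), of X R] R(4)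
  have "boundary_deg E (X \<union> R) \<le> boundary_deg E X" by linarith
  moreover have "induced_connected V E (X \<union> R)"
    using induced_connected_Un[OF iX(3) R(3)] X(1) R(1) assms(2) by blast
  ultimately show False
    using important_boundary_deg_less[OF X(2), of "X \<union> R"] \<open>\<not> R \<subseteq> X\<close> iX(2) R(2) by auto
qed

lemma card_important_sets_isolated_cut:
  assumes "simple_graph V E" "connected_min_cut V E y A R" "boundary_edges E R = {}" "x \<in> A"
  shows "card (important_sets V E x y A p) \<le> 1"
proof -
  have "X = R" if X: "X \<in> important_sets V E x y A p" for X
  proof -
    have "R \<subseteq> X" using connected_min_cut_subset_important[OF assms(1) _ assms(2) X] assms(4) by blast
    moreover have "x \<in> X \<inter> R" using X assms(2,4) by (auto simp: important_sets_def connected_min_cut_def)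
    moreover have "induced_connected V E X"
      using X importantD(3) by (auto simp: important_sets_def)
    ultimately show "X = R"
      using induced_connected_leaves_set[of V E X x R] assms(3) by blast
  qed
  then have "important_sets V E x y A p \<subseteq> {R}" by blast
  then show ?thesis using card_mono[of "{R}"] by simp
qed

lemma important_sets_split:
  assumes "simple_graph V E" "A \<noteq> {}" "connected_min_cut V E y A R"
    and "{u, v} \<in> E" "u \<in> R" "v \<notin> R"
  shows "important_sets V E x y A p \<subseteq>
    important_sets V (E - {{u, v}}) x y A (p - 1) \<union> important_sets V E x y (insert v R) p"
proof
  fix X assume X: "X \<in> important_sets V E x y A p"
  have RX: "R \<subseteq> X" using connected_min_cut_subset_important[OF assms(1-3) X] .
  have "u \<noteq> v" using assms(5,6) by blast
  show "X \<in> important_sets V (E - {{u, v}}) x y A (p - 1) \<union> important_sets V E x y (insert v R) p"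
  proof (cases "card ({u, v} \<inter> X) = 1")
    case True
    have "important V (E - {{u, v}}) x y X"
      using important_Diff_boundary_edge[OF assms(1) _ assms(4) True] X by (simp add: important_sets_def)
    moreover have "boundary_deg E X = boundary_deg (E - {{u, v}}) X + 1"
      using boundary_deg_Diff_boundary_edge[OF simple_graph_finite_edges[OF assms(1)] assms(4) True] .
    ultimately show ?thesis using X by (auto simp: important_sets_def)
  next
    case False
    then have "v \<in> X" using RX assms(5) card_doubleton_Int_eq_Suc_0[OF \<open>u \<noteq> v\<close>] by auto
    then show ?thesis using X RX by (auto simp: important_sets_def)
  qed
qed

lemma min_cut_insert_less:
  assumes "simple_graph V E" "induced_connected V E A" "connected_min_cut V E y A R"
    and "\<And>C. connected_min_cut V E y A C \<Longrightarrow> C \<subseteq> R"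
    and "{u, v} \<in> E" "u \<in> R" "v \<notin> R" "v \<noteq> y"
  shows "min_cut V E y A < min_cut V E y (insert v R)"
proof -
  have fin: "finite V" using assms(1) by (simp add: simple_graph_def)
  have R: "A \<subseteq> R" "y \<notin> R" "induced_connected V E R"
    using assms(3) unfolding connected_min_cut_def by blast+
  have "v \<in> V" using assms(1,5) by (auto simp: simple_graph_def)
  then have conn: "induced_connected V E (insert v R)"
    using induced_connected_insert[OF R(3) assms(6,5)] by blast
  have y: "y \<notin> insert v R" using R(2) assms(8) by blast
  obtain C where C: "connected_min_cut V E y (insert v R) C"
    using connected_min_cut_exists[OF assms(1) conn y] .
  have "min_cut V E y A \<le> min_cut V E y (insert v R)"
    using min_cut_mono[OF fin _ induced_connected_subset[OF conn] y] R(1) by blast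
  moreover have "min_cut V E y A \<noteq> min_cut V E y (insert v R)"
  proof
    assume "min_cut V E y A = min_cut V E y (insert v R)"
    with C R(1) have "connected_min_cut V E y A C" by (auto simp: connected_min_cut_def)
    with C assms(4,7) show False by (auto simp: connected_min_cut_def)
  qed
  ultimately show ?thesis by linarith
qed

lemma important_sets_target_empty:
  assumes "y \<in> A"
  shows "important_sets V E x y A p = {}"
  using assms unfolding important_sets_def by (blast dest: importantD(2))

lemma branching_weight_bound:
  fixes n n1 n2 l l1 l2 p :: nat
  assumes "n \<le> n1 + n2" "l \<le> l1 + 1" "l < l2" "1 \<le> p"
    and "n1 * 2 ^ l1 \<le> 4 ^ (p - 1)" "n2 * 2 ^ l2 \<le> 4 ^ p"
  shows "n * 2 ^ l \<le> 4 ^ p"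
proof -
  have "2 * (n1 * 2 ^ l) \<le> 4 * (n1 * 2 ^ l1)"
    using assms(2) power_increasing[of l "Suc l1" "2::nat"] by simp
  also have "\<dots> \<le> 4 ^ p" using assms(4,5) by (simp add: power_eq_if)
  finally have n1: "2 * (n1 * 2 ^ l) \<le> 4 ^ p" .
  have "2 * (n2 * 2 ^ l) \<le> n2 * 2 ^ l2"
    using assms(3) power_increasing[of "Suc l" l2 "2::nat"] by simp
  with assms(6) have n2: "2 * (n2 * 2 ^ l) \<le> 4 ^ p" by linarith
  have "n * 2 ^ l \<le> n1 * 2 ^ l + n2 * 2 ^ l"
    using mult_le_mono1[OF assms(1)] by (simp add: add_mult_distrib)
  with n1 n2 show ?thesis by linarith
qed

text \<open>Induction on \<open>2p - \<lambda>(A)\<close>, where \<open>\<lambda>(A) = min_cut V E y A\<close>. Take a boundary edge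
  \<open>uv\<close> of the furthest connected minimum cut \<open>R\<close>, \<open>u \<in> R\<close>. An important set cutting
  \<open>uv\<close> stays important in \<open>G - uv\<close> with budget \<open>p - 1\<close>, and \<open>\<lambda>\<close> drops by at most one;
  any other important set contains \<open>R + v\<close>, whose minimum cut exceeds \<open>\<lambda>(A)\<close>.\<close>
lemma card_important_sets_weighted:
  assumes "simple_graph V E" "induced_connected V E A" "x \<in> A" "y \<notin> A"
  shows "card (important_sets V E x y A p) * 2 ^ min_cut V E y A \<le> 4 ^ p"
  using assms
proof (induction "2 * p - min_cut V E y A" arbitrary: E A p rule: less_induct)
  case less
  note G = less.prems(1) and conn = less.prems(2) and x = less.prems(3) and y = less.prems(4)
  have fin: "finite V" using G by (simp add: simple_graph_def)
  define l where "l = min_cut V E y A"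
  show ?case
  proof (cases "p < l")
    case True
    then show ?thesis using important_sets_empty[OF fin] unfolding l_def by simp
  next
    case False
    then have lp: "l \<le> p" by simp
    obtain R where R: "connected_min_cut V E y A R"
      and furthest: "\<And>C. connected_min_cut V E y A C \<Longrightarrow> C \<subseteq> R"
      using furthest_connected_min_cut[OF G conn y] by blast
    have lR: "boundary_deg E R = l" and RA: "A \<subseteq> R" "y \<notin> R" "induced_connected V E R"
      using R by (simp_all add: connected_min_cut_def l_def)
    show ?thesis
    proof (cases "boundary_edges E R = {}")
      case True
      then have "card (important_sets V E x y A p) \<le> 1" "l = 0"
        using card_important_sets_isolated_cut[OF G R True x] lR by (simp_all add: boundary_deg_eq_card)
      then show ?thesis unfolding l_def by (simp add: le_trans[OF _ one_le_power])
    next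
      case False
      then obtain e where e: "e \<in> boundary_edges E R" by blast
      then obtain u v where uv: "e = {u, v}" "u \<in> R" "v \<notin> R" by (rule boundary_edgeE[OF G])
      have uvE: "{u, v} \<in> E" using e uv(1) by (simp add: boundary_edges_def)
      have "1 \<le> l" using boundary_deg_pos[OF G False] lR by simp
      with lp have p: "1 \<le> p" "l \<le> p" by linarith+
      let ?E' = "E - {{u, v}}" and ?A' = "insert v R"
      have l': "l \<le> min_cut V ?E' y A + 1"
        using min_cut_Diff_edge[OF G induced_connected_subset[OF conn] y] unfolding l_def .
      have uv_A: "\<not> {u, v} \<subseteq> A" using uv(3) RA(1) by blast
      have conn': "induced_connected V ?E' A"
        unfolding induced_connected_Diff_edge_iff[OF uv_A] by (rule conn)
      have "2 * (p - 1) - min_cut V ?E' y A < 2 * p - min_cut V E y A"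
        using l' p unfolding l_def by linarith
      from less.hyps[OF this simple_graph_Diff[OF G] conn' x y]
      have IH1: "card (important_sets V ?E' x y A (p - 1)) * 2 ^ min_cut V ?E' y A \<le> 4 ^ (p - 1)" .
      obtain l2 where l2: "l < l2" "card (important_sets V E x y ?A' p) * 2 ^ l2 \<le> 4 ^ p"
      proof (cases "v = y")
        case True
        then show ?thesis using that[of "Suc l"] important_sets_target_empty[of y ?A'] by simp
      next
        case False
        have lt: "l < min_cut V E y ?A'"
          using min_cut_insert_less[OF G conn R furthest uvE uv(2,3) False] unfolding l_def .
        have "v \<in> V" using G uvE by (auto simp: simple_graph_def)
        then have conn'': "induced_connected V E ?A'"
          using induced_connected_insert[OF RA(3) uv(2) uvE] by blast
        have "2 * p - min_cut V E y ?A' < 2 * p - min_cut V E y A"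
          using lt p unfolding l_def by linarith
        moreover have "x \<in> ?A'" "y \<notin> ?A'" using x RA(1,2) False by auto
        ultimately show ?thesis by (intro that[OF lt] less.hyps[OF _ G conn''])
      qed
      have "card (important_sets V E x y A p)
          \<le> card (important_sets V ?E' x y A (p - 1) \<union> important_sets V E x y ?A' p)"
        using important_sets_split[OF G _ R uvE uv(2,3), of x p] x finite_important_sets[OF fin]
        by (intro card_mono) blast+
      also have "\<dots> \<le> card (important_sets V ?E' x y A (p - 1)) + card (important_sets V E x y ?A' p)"
        by (rule card_Un_le)
      finally show ?thesis
        unfolding l_def[symmetric] by (rule branching_weight_bound[OF _ l' l2(1) p(1) IH1 l2(2)])
    qed
  qed
qed

lemma card_important_sets_le:
  assumes "simple_graph V E" "x \<in> V" "y \<noteq> x"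
  shows "card {X. important V E x y X \<and> boundary_deg E X \<le> p} \<le> 4 ^ p"
proof -
  have "{X. important V E x y X \<and> boundary_deg E X \<le> p} = important_sets V E x y {x} p"
    by (auto simp: important_sets_def dest: importantD(1))
  moreover have "card (important_sets V E x y {x} p) * 2 ^ min_cut V E y {x} \<le> 4 ^ p"
    using assms by (intro card_important_sets_weighted induced_connected_singleton) auto
  ultimately show ?thesis by (metis le_trans mult_le_mono2 mult.right_neutral one_le_numeral one_le_power)
qed

section \<open>Covering a well-connected set\<close>

lemma card_UN_le_mult:
  assumes "finite I" "\<And>i. i \<in> I \<Longrightarrow> card (B i) \<le> K"
  shows "card (\<Union>i\<in>I. B i) \<le> card I * K"
proof -
  have "card (\<Union>i\<in>I. B i) \<le> (\<Sum>i\<in>I. card (B i))" by (rule card_UN_le[OF assms(1)])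
  also have "\<dots> \<le> card I * K" using sum_bounded_above[of I "\<lambda>i. card (B i)" K] assms(2) by simp
  finally show ?thesis .
qed

lemma card_boundary_edges_of_important_sets:
  assumes "simple_graph V E" "T \<subseteq> V" "y \<notin> T"
  shows "card (\<Union>X\<in>{X. \<exists>x\<in>T. important V E x y X \<and> boundary_deg E X \<le> p}. boundary_edges E X)
    \<le> card T * 4 ^ p * p"
proof -
  let ?I = "{X. \<exists>x\<in>T. important V E x y X \<and> boundary_deg E X \<le> p}"
  have fin: "finite V" using assms(1) by (simp add: simple_graph_def)
  have "?I = (\<Union>x\<in>T. {X. important V E x y X \<and> boundary_deg E X \<le> p})" by blast
  also have "card \<dots> \<le> card T * 4 ^ p"
    using assms finite_subset[OF assms(2) fin]
    by (intro card_UN_le_mult card_important_sets_le) auto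
  finally have "card ?I \<le> card T * 4 ^ p" .
  moreover have "finite ?I"
    by (rule finite_subset[of _ "Pow V"])
      (auto simp: fin dest: importantD(3) induced_connected_subset)
  then have "card (\<Union>X\<in>?I. boundary_edges E X) \<le> card ?I * p"
    by (rule card_UN_le_mult) (auto simp: boundary_deg_eq_card)
  ultimately show ?thesis by (meson le_trans mult_le_mono1)
qed

lemma simple_graph_star:
  assumes "simple_graph V E" "Y \<subseteq> V" "ys \<notin> V"
  shows "simple_graph (star_V V ys) (star_E E Y ys)"
  using assms unfolding simple_graph_def star_V_def star_E_def
  by (auto simp: card_insert_if)

lemma is_path_first_edge:
  assumes "is_path V E q" "hd q \<noteq> last q"
  shows "{hd q, q ! 1} \<in> E" "hd q \<noteq> q ! 1" "q ! 1 \<in> set q"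
proof -
  have "q \<noteq> []" using assms(1) by (simp add: is_path_def)
  then have "1 < length q" using assms(2) by (cases q) auto
  then show "{hd q, q ! 1} \<in> E" "hd q \<noteq> q ! 1" "q ! 1 \<in> set q"
    using assms(1) \<open>q \<noteq> []\<close> unfolding is_path_def
    by (auto simp: hd_conv_nth nth_eq_iff_index_eq)
qed

lemma inj_on_first_edge:
  assumes "\<And>q. q \<in> P \<Longrightarrow> is_path V E q \<and> hd q \<noteq> last q"
    and "\<And>q r. q \<in> P \<Longrightarrow> r \<in> P \<Longrightarrow> q \<noteq> r \<Longrightarrow> set q \<inter> set r = {}"
  shows "inj_on (\<lambda>q. {hd q, q ! 1}) P"
proof
  fix q r assume qr: "q \<in> P" "r \<in> P" "{hd q, q ! 1} = {hd r, r ! 1}"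
  have "hd q \<in> set q" "hd q \<in> set r"
    using assms(1)[OF qr(1)] assms(1)[OF qr(2)] is_path_first_edge(3)[of V E r] qr(3)
    by (auto simp: is_path_def doubleton_eq_iff)
  then show "q = r" using assms(2)[OF qr(1,2)] by blast
qed

lemma well_connected_disjoint_paths:
  assumes "well_connected V E Y" "finite Y" "W \<subseteq> Y"
  obtains P where "finite P" "card P = card W div 2"
    "\<And>q. q \<in> P \<Longrightarrow> is_path V E q \<and> hd q \<in> W \<and> hd q \<noteq> last q"
    "\<And>q r. q \<in> P \<Longrightarrow> r \<in> P \<Longrightarrow> q \<noteq> r \<Longrightarrow> set q \<inter> set r = {}"
proof -
  obtain X1 where X1: "X1 \<subseteq> W" "card X1 = card W div 2" "finite X1"
    by (rule obtain_subset_with_card_n[OF div_le_dividend])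
  have "2 * (card W div 2) \<le> card W" by simp
  then have "card W div 2 \<le> card (W - X1)" using card_Diff_subset[OF X1(3,1)] X1(2) by linarith
  then obtain X2 where X2: "X2 \<subseteq> W - X1" "card X2 = card W div 2"
    by (rule obtain_subset_with_card_n)
  have "2 * card X1 \<le> card Y" using card_mono[OF assms(2,3)] X1(2) by simp
  moreover have "X1 \<subseteq> Y" "X2 \<subseteq> Y" "card X1 = card X2" using X1 X2 assms(3) by auto
  ultimately have "\<exists>P. finite P \<and> card P = card X1 \<and>
      (\<forall>q\<in>P. is_path V E q \<and> hd q \<in> X1 \<and> last q \<in> X2) \<and>
      (\<forall>q\<in>P. \<forall>r\<in>P. q \<noteq> r \<longrightarrow> set q \<inter> set r = {})"
    using assms(1) unfolding well_connected_def by simp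
  then obtain P where P: "finite P" "card P = card X1"
    "\<forall>q\<in>P. is_path V E q \<and> hd q \<in> X1 \<and> last q \<in> X2"
    "\<forall>q\<in>P. \<forall>r\<in>P. q \<noteq> r \<longrightarrow> set q \<inter> set r = {}"
    by blast
  show ?thesis
  proof (rule that[of P])
    fix q assume "q \<in> P"
    then have "is_path V E q" "hd q \<in> X1" "last q \<in> X2" using P(3) by auto
    then show "is_path V E q \<and> hd q \<in> W \<and> hd q \<noteq> last q" using X1(1) X2(1) by auto
  qed (use P X1(2) in auto)
qed

lemma well_connected_cover_bound:
  assumes "simple_graph V E" "Y \<subseteq> V" "well_connected V E Y" "ys \<notin> V"
    and cover: "\<And>u v. {u, v} \<in> E \<Longrightarrow> u \<in> \<Union>\<X> \<or> v \<in> \<Union>\<X>"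
    and target: "\<And>X. X \<in> \<X> \<Longrightarrow> ys \<notin> X"
  shows "card Y \<le> 2 * card (\<Union>X\<in>\<X>. boundary_edges (star_E E Y ys) X) + 1"
proof -
  let ?Z = "\<Union>\<X>" and ?F = "\<Union>X\<in>\<X>. boundary_edges (star_E E Y ys) X"
  have fY: "finite Y" using assms(1,2) finite_subset by (auto simp: simple_graph_def)
  have "finite (star_E E Y ys)"
    using simple_graph_finite_edges[OF simple_graph_star[OF assms(1,2,4)]] .
  then have fF: "finite ?F" by (rule finite_subset[rotated]) (auto simp: boundary_edges_def)
  obtain P where P: "finite P" "card P = card (Y - ?Z) div 2"
    and paths: "\<And>q. q \<in> P \<Longrightarrow> is_path V E q \<and> hd q \<in> Y - ?Z \<and> hd q \<noteq> last q"
    and disj: "\<And>q r. q \<in> P \<Longrightarrow> r \<in> P \<Longrightarrow> q \<noteq> r \<Longrightarrow> set q \<inter> set r = {}"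
    using well_connected_disjoint_paths[OF assms(3) fY Diff_subset] by blast
  let ?f = "\<lambda>q. {hd q, q ! 1}" and ?g = "\<lambda>y. {ys, y}"
  have "?f q \<in> ?F \<and> ys \<notin> ?f q" if q: "q \<in> P" for q
  proof -
    have path: "is_path V E q" "hd q \<notin> ?Z" "hd q \<noteq> last q" using paths[OF q] by auto
    note first = is_path_first_edge[OF path(1,3)]
    then obtain X where X: "X \<in> \<X>" "q ! 1 \<in> X" using cover path(2) by blast
    have "hd q \<notin> X" using path(2) X(1) by blast
    then have "?f q \<in> boundary_edges (star_E E Y ys) X"
      using first X(2) by (auto simp: boundary_edges_def star_E_def card_doubleton_Int_eq_Suc_0)
    moreover have "?f q \<subseteq> V" using first(3) path(1) by (auto simp: is_path_def hd_conv_nth)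
    ultimately show ?thesis using X(1) assms(4) by blast
  qed
  then have f: "?f ` P \<subseteq> ?F" "\<And>q. q \<in> P \<Longrightarrow> ys \<notin> ?f q" by blast+
  have g: "?g ` (Y \<inter> ?Z) \<subseteq> ?F"
  proof
    fix e assume "e \<in> ?g ` (Y \<inter> ?Z)"
    then obtain y where y: "e = {ys, y}" "y \<in> Y" "y \<in> ?Z" by blast
    then obtain X where X: "X \<in> \<X>" "y \<in> X" by blast
    have "ys \<noteq> y" "ys \<notin> X" using y(2) X(1) assms(2,4) target by auto
    with y X show "e \<in> ?F" by (auto simp: boundary_edges_def star_E_def card_doubleton_Int_eq_Suc_0)
  qed
  have "inj_on ?f P" by (rule inj_on_first_edge) (use paths disj in blast)+
  moreover have "inj_on ?g (Y \<inter> ?Z)" using assms(2,4) by (auto simp: inj_on_def doubleton_eq_iff)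
  moreover have "?f ` P \<inter> ?g ` (Y \<inter> ?Z) = {}" using f(2) by blast
  ultimately have "card P + card (Y \<inter> ?Z) = card (?f ` P \<union> ?g ` (Y \<inter> ?Z))"
    using P(1) fY by (simp add: card_Un_disjoint card_image)
  also have "\<dots> \<le> card ?F" using f(1) g fF by (intro card_mono) auto
  finally have "card P + card (Y \<inter> ?Z) \<le> card ?F" .
  moreover have "card Y = card (Y \<inter> ?Z) + card (Y - ?Z)" by (rule card_Int_Diff[OF fY])
  ultimately show ?thesis using P(2) by linarith
qed

theorem lemma7:
  fixes V :: "'a set" and E :: "'a set set" and Y T1 T2 :: "'a set" and ys :: 'a
    and k t :: nat
  assumes "simple_graph V E"
    and "bipartite V E"
    and "T1 \<subseteq> V" and "T2 \<subseteq> V" and "T1 \<inter> T2 = {}"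
    and "card T1 + card T2 \<le> t"
    and "Y \<subseteq> V" and "well_connected V E Y"
    and "card Y \<ge> 2 * (4 * k^2) * t * 4 ^ (4 * k^2) + 2"
    and "ys \<notin> V"
  shows "\<exists>u v. {u, v} \<in> E \<and> u \<notin> Zset V E Y ys T1 T2 k \<and> v \<notin> Zset V E Y ys T1 T2 k"
proof (rule ccontr)
  let ?Vs = "star_V V ys" and ?Es = "star_E E Y ys" and ?p = "4 * k^2"
  let ?I = "{X. \<exists>x\<in>T1 \<union> T2. important ?Vs ?Es x ys X \<and> boundary_deg ?Es X \<le> ?p}"
  assume "\<not> ?thesis"
  then have cover: "\<And>u v. {u, v} \<in> E \<Longrightarrow> u \<in> \<Union>?I \<or> v \<in> \<Union>?I"
    unfolding Zset_def by blast
  have "card Y \<le> 2 * card (\<Union>X\<in>?I. boundary_edges ?Es X) + 1"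
  proof (rule well_connected_cover_bound[OF assms(1,7,8,10), of ?I])
    fix X assume "X \<in> ?I"
    then obtain x where "important ?Vs ?Es x ys X" by blast
    then show "ys \<notin> X" by (rule importantD(2))
  qed (rule cover)
  also have "card (\<Union>X\<in>?I. boundary_edges ?Es X) \<le> card (T1 \<union> T2) * 4 ^ ?p * ?p"
    using assms(3,4,10) by (intro card_boundary_edges_of_important_sets
        simple_graph_star[OF assms(1,7,10)]) (auto simp: star_V_def)
  also have "card (T1 \<union> T2) \<le> t" using card_Un_le[of T1 T2] assms(6) by linarith
  finally have "card Y \<le> 2 * (t * 4 ^ ?p * ?p) + 1" by (simp add: mult_le_mono1)
  then show False using assms(9) by (simp add: algebra_simps)
qed

end
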